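(* Let $X$ be a topological space, $\mathcal{C}$ the set of its closed sets, and $\mathcal{A}\subseteq\mathcal{C}$. The following are equivalent: (i) the crisp context $(X,\mathcal{A},\in)$ is a reduct of $(X,\mathcal{C},\in)$ in FCA; (ii) the crisp context $(X,\mathcal{A},\notin)$ is a reduct of $(X,\mathcal{C},\notin)$ in RST; (iii) $\mathcal{A}$ is a base for the closed sets of $X$, i.e. every $C\in\mathcal{C}$ equals $\bigcap\mathcal{A}'$ for some $\mathcal{A}'\subseteq\mathcal{A}$ (with $\bigcap\emptyset=X$).
   Context: Crisp contexts are $L$-contexts for $L=\{0,1\}$ with $*=\wedge$; a context is a triple $(X,Y,R)$ with $R\subseteq X\times Y$, and subsets are identified with $\{0,1\}$-valued maps. $(X,\mathcal{C},\in)$ has relation $\{(x,C)\mid x\in C\}$ and $\notin$ is its complement. For $U\subseteq X$, $V\subseteq Y$: $R^\uparrow U=\{y\mid\forall x\in U,(x,y)\in R\}$, $R^\downarrow V=\{x\mid\forall y\in V,(x,y)\in R\}$, $R^\exists U=\{y\mid\exists x\in U,(x,y)\in R\}$, $R^\forall V=\{x\mid\forall y,(x,y)\in R\Rightarrow y\in V\}$. $\mathcal{M}R=\{U\mid R^\downarrow R^\uparrow U=U\}$, $\mathcal{K}R=\{U\mid R^\forall R^\exists U=U\}$. For $X'\subseteq X$, $Y'\subseteq Y$, $R_{X',Y'}=R\cap(X'\times Y')$. $(X',Y',R_{X',Y'})$ is a reduct of $(X,Y,R)$ in FCA if the map $\mathcal{M}R_{X',Y'}\to\mathcal{M}R$,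 $U'\mapsto R^\downarrow R^\uparrow U'$, is an order isomorphism (for inclusion); it is a reduct in RST if the map $\mathcal{K}R_{X',Y'}\to\mathcal{K}R$, $U'\mapsto R^\forall R^\exists U'$, is an order isomorphism. *)

theory Defs
  imports "HOL-Analysis.Analysis"
begin

definition up_op :: "'a set \<Rightarrow> 'b set \<Rightarrow> ('a \<times> 'b) set \<Rightarrow> 'a set \<Rightarrow> 'b set" where
  "up_op X Y R U = {y \<in> Y. \<forall>x\<in>U. (x, y) \<in> R}"

definition down_op :: "'a set \<Rightarrow> 'b set \<Rightarrow> ('a \<times> 'b) set \<Rightarrow> 'b set \<Rightarrow> 'a set" where
  "down_op X Y R V = {x \<in> X. \<forall>y\<in>V. (x, y) \<in> R}"

definition ex_op :: "'a set \<Rightarrow> 'b set \<Rightarrow> ('a \<times> 'b) set \<Rightarrow> 'a set \<Rightarrow> 'b set" where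
  "ex_op X Y R U = {y \<in> Y. \<exists>x\<in>U. (x, y) \<in> R}"

definition all_op :: "'a set \<Rightarrow> 'b set \<Rightarrow> ('a \<times> 'b) set \<Rightarrow> 'b set \<Rightarrow> 'a set" where
  "all_op X Y R V = {x \<in> X. \<forall>y\<in>Y. (x, y) \<in> R \<longrightarrow> y \<in> V}"

definition M_sys :: "'a set \<Rightarrow> 'b set \<Rightarrow> ('a \<times> 'b) set \<Rightarrow> 'a set set" where
  "M_sys X Y R = {U. U \<subseteq> X \<and> down_op X Y R (up_op X Y R U) = U}"

definition K_sys :: "'a set \<Rightarrow> 'b set \<Rightarrow> ('a \<times> 'b) set \<Rightarrow> 'a set set" where
  "K_sys X Y R = {U. U \<subseteq> X \<and> all_op X Y R (ex_op X Y R U) = U}"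

definition order_iso_on :: "'c set set \<Rightarrow> 'c set set \<Rightarrow> ('c set \<Rightarrow> 'c set) \<Rightarrow> bool" where
  "order_iso_on A B f \<longleftrightarrow> bij_betw f A B \<and> (\<forall>U\<in>A. \<forall>V\<in>A. U \<subseteq> V \<longleftrightarrow> f U \<subseteq> f V)"

definition restr :: "('a \<times> 'b) set \<Rightarrow> 'a set \<Rightarrow> 'b set \<Rightarrow> ('a \<times> 'b) set" where
  "restr R X' Y' = R \<inter> (X' \<times> Y')"

definition reduct_FCA :: "'a set \<Rightarrow> 'b set \<Rightarrow> ('a \<times> 'b) set \<Rightarrow> 'a set \<Rightarrow> 'b set \<Rightarrow> bool" where
  "reduct_FCA X Y R X' Y' \<longleftrightarrow> X' \<subseteq> X \<and> Y' \<subseteq> Y \<and>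
     order_iso_on (M_sys X' Y' (restr R X' Y')) (M_sys X Y R)
       (\<lambda>U'. down_op X Y R (up_op X Y R U'))"

definition reduct_RST :: "'a set \<Rightarrow> 'b set \<Rightarrow> ('a \<times> 'b) set \<Rightarrow> 'a set \<Rightarrow> 'b set \<Rightarrow> bool" where
  "reduct_RST X Y R X' Y' \<longleftrightarrow> X' \<subseteq> X \<and> Y' \<subseteq> Y \<and>
     order_iso_on (K_sys X' Y' (restr R X' Y')) (K_sys X Y R)
       (\<lambda>U'. all_op X Y R (ex_op X Y R U'))"

definition mem_rel :: "'a set \<Rightarrow> 'a set set \<Rightarrow> ('a \<times> 'a set) set" where
  "mem_rel X C = {(x, c). x \<in> X \<and> c \<in> C \<and> x \<in> c}"

definition nmem_rel :: "'a set \<Rightarrow> 'a set set \<Rightarrow> ('a \<times> 'a set) set" where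
  "nmem_rel X C = {(x, c). x \<in> X \<and> c \<in> C \<and> x \<notin> c}"

end

theory Submission
  imports Defs
begin

text \<open>In both contexts (X, \<A>, \<in>) and (X, \<A>, \<notin>) the composite operator sends U to the
  intersection of X with all members of \<A> containing U, so the concept extents and the
  definable sets alike are the intersections X \<inter> \<Inter>\<A>' with \<A>' \<subseteq> \<A>. When \<A> consists of
  closed sets these are again closed, so the canonical map into the closed sets is the
  identity, and it is an order isomorphism exactly when every closed set is such an
  intersection.\<close>

definition intersection_closure :: "'a set \<Rightarrow> 'a set set \<Rightarrow> 'a set set" where
  "intersection_closure X \<A> = {X \<inter> \<Inter>\<A>' | \<A>'. \<A>' \<subseteq> \<A>}"

lemma mem_intersection_closure:
  "U \<in> intersection_closure X \<A> \<longleftrightarrow> (\<exists>\<A>'\<subseteq>\<A>. U = X \<inter> \<Inter>\<A>')"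
  unfolding intersection_closure_def by auto

lemma intersection_closure_mono:
  "\<A> \<subseteq> \<B> \<Longrightarrow> intersection_closure X \<A> \<subseteq> intersection_closure X \<B>"
  unfolding intersection_closure_def by blast

lemma down_up_mem_rel:
  "U \<subseteq> X \<Longrightarrow> down_op X \<A> (mem_rel X \<A>) (up_op X \<A> (mem_rel X \<A>) U) = X \<inter> \<Inter>{a\<in>\<A>. U \<subseteq> a}"
  unfolding down_op_def up_op_def mem_rel_def by auto

lemma all_ex_nmem_rel:
  "U \<subseteq> X \<Longrightarrow> all_op X \<A> (nmem_rel X \<A>) (ex_op X \<A> (nmem_rel X \<A>) U) = X \<inter> \<Inter>{a\<in>\<A>. U \<subseteq> a}"
  unfolding all_op_def ex_op_def nmem_rel_def by blast

lemma Inter_supersets_eq_iff: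
  "X \<inter> \<Inter>{a\<in>\<A>. U \<subseteq> a} = U \<longleftrightarrow> U \<in> intersection_closure X \<A>"
proof
  assume "X \<inter> \<Inter>{a\<in>\<A>. U \<subseteq> a} = U"
  then show "U \<in> intersection_closure X \<A>"
    unfolding mem_intersection_closure by (intro exI[of _ "{a\<in>\<A>. U \<subseteq> a}"]) auto
next
  assume "U \<in> intersection_closure X \<A>"
  then obtain \<A>' where "\<A>' \<subseteq> \<A>" and U: "U = X \<inter> \<Inter>\<A>'"
    unfolding mem_intersection_closure by blast
  then have "\<A>' \<subseteq> {a\<in>\<A>. U \<subseteq> a}" by blast
  then have "X \<inter> \<Inter>{a\<in>\<A>. U \<subseteq> a} \<subseteq> X \<inter> \<Inter>\<A>'" by blast
  with U show "X \<inter> \<Inter>{a\<in>\<A>. U \<subseteq> a} = U" by blast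
qed

lemma intersection_closure_subset: "U \<in> intersection_closure X \<A> \<Longrightarrow> U \<subseteq> X"
  unfolding intersection_closure_def by blast

lemma M_sys_mem_rel: "M_sys X \<A> (mem_rel X \<A>) = intersection_closure X \<A>"
proof (intro set_eqI)
  fix U
  show "U \<in> M_sys X \<A> (mem_rel X \<A>) \<longleftrightarrow> U \<in> intersection_closure X \<A>"
  proof (cases "U \<subseteq> X")
    case True
    then show ?thesis by (simp add: M_sys_def down_up_mem_rel Inter_supersets_eq_iff)
  next
    case False
    then show ?thesis by (auto simp: M_sys_def dest: intersection_closure_subset)
  qed
qed

lemma K_sys_nmem_rel: "K_sys X \<A> (nmem_rel X \<A>) = intersection_closure X \<A>"
proof (intro set_eqI)
  fix U
  show "U \<in> K_sys X \<A> (nmem_rel X \<A>) \<longleftrightarrow> U \<in> intersection_closure X \<A>"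
  proof (cases "U \<subseteq> X")
    case True
    then show ?thesis by (simp add: K_sys_def all_ex_nmem_rel Inter_supersets_eq_iff)
  next
    case False
    then show ?thesis by (auto simp: K_sys_def dest: intersection_closure_subset)
  qed
qed

lemma restr_mem_rel: "\<A> \<subseteq> \<C> \<Longrightarrow> restr (mem_rel X \<C>) X \<A> = mem_rel X \<A>"
  unfolding restr_def mem_rel_def by auto

lemma restr_nmem_rel: "\<A> \<subseteq> \<C> \<Longrightarrow> restr (nmem_rel X \<C>) X \<A> = nmem_rel X \<A>"
  unfolding restr_def nmem_rel_def by auto

lemma order_iso_on_cong:
  "(\<And>U. U \<in> A \<Longrightarrow> f U = g U) \<Longrightarrow> order_iso_on A B f \<longleftrightarrow> order_iso_on A B g"
  unfolding order_iso_on_def using bij_betw_cong[of A f g B] by auto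

lemma order_iso_on_id_iff: "order_iso_on A B id \<longleftrightarrow> A = B"
  unfolding order_iso_on_def by (auto simp: bij_betw_def)

lemma reduct_FCA_mem_rel_iff:
  assumes "\<A> \<subseteq> \<C>"
  shows "reduct_FCA X \<C> (mem_rel X \<C>) X \<A> \<longleftrightarrow>
    order_iso_on (intersection_closure X \<A>) (intersection_closure X \<C>)
      (\<lambda>U. X \<inter> \<Inter>{c\<in>\<C>. U \<subseteq> c})"
proof -
  have "order_iso_on (intersection_closure X \<A>) (intersection_closure X \<C>)
      (\<lambda>U. down_op X \<C> (mem_rel X \<C>) (up_op X \<C> (mem_rel X \<C>) U)) \<longleftrightarrow>
    order_iso_on (intersection_closure X \<A>) (intersection_closure X \<C>)
      (\<lambda>U. X \<inter> \<Inter>{c\<in>\<C>. U \<subseteq> c})"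
    by (intro order_iso_on_cong down_up_mem_rel intersection_closure_subset)
  then show ?thesis
    using assms by (simp add: reduct_FCA_def restr_mem_rel M_sys_mem_rel)
qed

lemma reduct_RST_nmem_rel_iff:
  assumes "\<A> \<subseteq> \<C>"
  shows "reduct_RST X \<C> (nmem_rel X \<C>) X \<A> \<longleftrightarrow>
    order_iso_on (intersection_closure X \<A>) (intersection_closure X \<C>)
      (\<lambda>U. X \<inter> \<Inter>{c\<in>\<C>. U \<subseteq> c})"
proof -
  have "order_iso_on (intersection_closure X \<A>) (intersection_closure X \<C>)
      (\<lambda>U. all_op X \<C> (nmem_rel X \<C>) (ex_op X \<C> (nmem_rel X \<C>) U)) \<longleftrightarrow>
    order_iso_on (intersection_closure X \<A>) (intersection_closure X \<C>)
      (\<lambda>U. X \<inter> \<Inter>{c\<in>\<C>. U \<subseteq> c})"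
    by (intro order_iso_on_cong all_ex_nmem_rel intersection_closure_subset)
  then show ?thesis
    using assms by (simp add: reduct_RST_def restr_nmem_rel K_sys_nmem_rel)
qed

lemma order_iso_on_closure_iff_base:
  assumes closure_system: "intersection_closure X \<C> = \<C>" and "\<A> \<subseteq> \<C>"
  shows "order_iso_on (intersection_closure X \<A>) \<C> (\<lambda>U. X \<inter> \<Inter>{c\<in>\<C>. U \<subseteq> c}) \<longleftrightarrow>
    (\<forall>C\<in>\<C>. \<exists>\<A>'\<subseteq>\<A>. C = X \<inter> \<Inter>\<A>')"
proof -
  have sub: "intersection_closure X \<A> \<subseteq> \<C>"
    using intersection_closure_mono[OF \<open>\<A> \<subseteq> \<C>\<close>, of X] closure_system by simp
  then have "order_iso_on (intersection_closure X \<A>) \<C> (\<lambda>U. X \<inter> \<Inter>{c\<in>\<C>. U \<subseteq> c}) \<longleftrightarrow>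
      order_iso_on (intersection_closure X \<A>) \<C> id"
  proof (intro order_iso_on_cong)
    fix U assume "U \<in> intersection_closure X \<A>"
    then have "U \<in> intersection_closure X \<C>" using sub by (subst closure_system) blast
    then show "X \<inter> \<Inter>{c\<in>\<C>. U \<subseteq> c} = id U"
      by (simp add: Inter_supersets_eq_iff)
  qed
  also have "\<dots> \<longleftrightarrow> \<C> \<subseteq> intersection_closure X \<A>"
    unfolding order_iso_on_id_iff using sub by blast
  also have "\<dots> \<longleftrightarrow> (\<forall>C\<in>\<C>. \<exists>\<A>'\<subseteq>\<A>. C = X \<inter> \<Inter>\<A>')"
    by (simp only: subset_eq mem_intersection_closure)
  finally show ?thesis .
qed

lemma intersection_closure_closedin:
  "intersection_closure (topspace T) {C. closedin T C} = {C. closedin T C}"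
proof (intro equalityI subsetI)
  fix U assume "U \<in> intersection_closure (topspace T) {C. closedin T C}"
  then obtain \<A>' where "\<A>' \<subseteq> {C. closedin T C}" and U: "U = topspace T \<inter> \<Inter>\<A>'"
    unfolding mem_intersection_closure by blast
  then have "closedin T (\<Inter>(insert (topspace T) \<A>'))"
    by (intro closedin_Inter) auto
  then show "U \<in> {C. closedin T C}" by (simp add: U)
next
  fix C assume "C \<in> {C. closedin T C}"
  then have "C = topspace T \<inter> \<Inter>{C}" and "{C} \<subseteq> {C. closedin T C}"
    using closedin_subset by auto
  then show "C \<in> intersection_closure (topspace T) {C. closedin T C}"
    unfolding mem_intersection_closure by blast
qed

theorem mainTheorem10:
  fixes T :: "'a topology" and \<A> :: "'a set set"
  defines "X \<equiv> topspace T" and "\<C> \<equiv> {C. closedin T C}"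
  assumes "\<A> \<subseteq> \<C>"
  shows "(reduct_FCA X \<C> (mem_rel X \<C>) X \<A> \<longleftrightarrow> reduct_RST X \<C> (nmem_rel X \<C>) X \<A>)
       \<and> (reduct_RST X \<C> (nmem_rel X \<C>) X \<A> \<longleftrightarrow>
            (\<forall>C\<in>\<C>. \<exists>\<A>'\<subseteq>\<A>. C = X \<inter> \<Inter>\<A>'))"
proof -
  have closure_system: "intersection_closure X \<C> = \<C>"
    unfolding X_def \<C>_def by (rule intersection_closure_closedin)
  have "reduct_FCA X \<C> (mem_rel X \<C>) X \<A> \<longleftrightarrow> (\<forall>C\<in>\<C>. \<exists>\<A>'\<subseteq>\<A>. C = X \<inter> \<Inter>\<A>')"
    using reduct_FCA_mem_rel_iff[OF assms(3)] order_iso_on_closure_iff_base[OF closure_system assms(3)]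
    by (simp add: closure_system)
  moreover have "reduct_RST X \<C> (nmem_rel X \<C>) X \<A> \<longleftrightarrow> (\<forall>C\<in>\<C>. \<exists>\<A>'\<subseteq>\<A>. C = X \<inter> \<Inter>\<A>')"
    using reduct_RST_nmem_rel_iff[OF assms(3)] order_iso_on_closure_iff_base[OF closure_system assms(3)]
    by (simp add: closure_system)
  ultimately show ?thesis by blast
qed

end
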